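(* Let $\gamma\in C^1((0,\infty))$ be positive, and assume one of the following: (a) $\gamma$ is non-increasing on $(0,\infty)$ and there is $A>0$ with $\int_s^{2s}\gamma(\eta)\,d\eta\le A$ for all $s\ge1$; (b) there are $b_0\in(0,1]$ and $s_1>0$ with $s\gamma'(s)+b_0\gamma(s)\le0$ for all $s\ge s_1$; (c) there are constants $l>0$ and $0<B_l\le A_l<\infty$ with $(1-l)A_l<B_l$ and $B_l=\liminf_{s\to\infty}s^l\gamma(s)\le\limsup_{s\to\infty}s^l\gamma(s)=A_l$. Then $\gamma$ satisfies (A3).
   Context: (A3): there is $b_0\in(0,1]$ such that for every $s_0>0$ there exists $K_0(s_0)>0$ (depending only on $\gamma$, $b_0$, $s_0$) with $s\gamma(s)+(b_0-1)\int_1^s\gamma(\eta)\,d\eta\le K_0(s_0)$ for all $s\ge s_0$. *)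

theory Defs
  imports "HOL-Analysis.Analysis"
begin

definition oint :: "real \<Rightarrow> real \<Rightarrow> (real \<Rightarrow> real) \<Rightarrow> real" where
  "oint a b f = (if a \<le> b then integral {a..b} f else - integral {b..a} f)"

definition A3 :: "(real \<Rightarrow> real) \<Rightarrow> bool" where
  "A3 \<gamma> \<longleftrightarrow> (\<exists>b0. 0 < b0 \<and> b0 \<le> 1 \<and>
     (\<forall>s0>0. \<exists>K0>0. \<forall>s\<ge>s0. s * \<gamma> s + (b0 - 1) * oint 1 s \<gamma> \<le> K0))"

end

theory Submission
  imports Defs
begin

text \<open>(A3) only constrains large s: on a compact interval [s0, S] the continuous function
  s \<gamma>(s) is bounded, and (b0 - 1) times the oriented integral from 1 is bounded above because
  \<gamma> > 0. In case (a) monotonicity gives s \<gamma>(2s) \<le> 2 \<integral>[s,2s] \<gamma>, so s \<gamma>(s) is bounded and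
  b0 = 1 works. In case (b) the function s \<gamma>(s) + (b0 - 1) \<integral>[1,s] \<gamma> has derivative
  s \<gamma>'(s) + b0 \<gamma>(s) \<le> 0, so it is eventually non-increasing. In case (c) with l < 1, eventually
  (B - e) s^-l \<le> \<gamma>(s) \<le> (A + e) s^-l; integrating the lower bound, the growth s^(1-l) of
  s \<gamma>(s) is compensated by (b0 - 1) \<integral>[1,s] \<gamma> as soon as (1 - l)(A + e) \<le> (1 - b0)(B - e),
  which the hypothesis (1 - l) A < B allows. For l \<ge> 1, s \<gamma>(s) is simply bounded.\<close>

lemma eventually_between_Liminf_Limsup:
  fixes f :: "real \<Rightarrow> real"
  assumes "Liminf at_top (\<lambda>s. ereal (f s)) = ereal B"
    and "Limsup at_top (\<lambda>s. ereal (f s)) = ereal A" and "e > 0"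
  shows "\<forall>\<^sub>F s in at_top. B - e < f s \<and> f s < A + e"
proof -
  have "\<forall>\<^sub>F s in at_top. ereal (f s) < ereal (A + e)"
    by (rule Limsup_lessD) (use assms in simp)
  moreover have "\<forall>\<^sub>F s in at_top. ereal (B - e) < ereal (f s)"
    by (rule less_LiminfD) (use assms in simp)
  ultimately show ?thesis by eventually_elim simp
qed

lemma exists_exponent_and_margin:
  fixes l A B :: real
  assumes "0 < l" "l < 1" "0 \<le> A" "0 < B" "(1 - l) * A < B"
  shows "\<exists>b0 e. 0 < b0 \<and> b0 \<le> 1 \<and> e > 0 \<and> (1 - l) * (A + e) \<le> (1 - b0) * (B - e)"
proof -
  define d where "d = B - (1 - l) * A"
  define b0 where "b0 = d / (2 * B)"
  define e where "e = d / 4"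
  have "A * l \<le> A" using assms by (intro mult_right_le_one_le) auto
  then have b0: "0 < b0" "b0 < 1" and e: "e > 0"
    using assms by (auto simp: b0_def e_def d_def field_simps)
  have B: "(1 - b0) * B = B - 2 * e" using assms by (simp add: b0_def e_def field_simps)
  \<comment> \<open>both weights 1 - l and 1 - b0 are below 1, so the margin 2e absorbs them\<close>
  have "(1 - l) * e \<le> e" "(1 - b0) * e \<le> e"
    using assms b0 e by (auto intro: mult_left_le_one_le)
  moreover have "(1 - l) * A = B - 4 * e" unfolding e_def d_def by (simp add: field_simps)
  moreover have "(1 - l) * (A + e) = (1 - l) * A + (1 - l) * e"
    "(1 - b0) * (B - e) = (1 - b0) * B - (1 - b0) * e"
    by (simp_all add: algebra_simps)
  ultimately have "(1 - l) * (A + e) \<le> (1 - b0) * (B - e)"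
    using B by linarith
  then show ?thesis using b0 e by (intro exI[of _ b0] exI[of _ e]) auto
qed

context
  fixes \<gamma> :: "real \<Rightarrow> real"
  assumes cont: "continuous_on {0<..} \<gamma>"
    and pos: "\<And>s. s > 0 \<Longrightarrow> \<gamma> s > 0"
begin

lemma integrable_on_Icc_pos: "a > 0 \<Longrightarrow> \<gamma> integrable_on {a..b}"
  by (rule integrable_continuous_interval, rule continuous_on_subset[OF cont]) auto

lemma integral_Icc_pos_nonneg: "a > 0 \<Longrightarrow> integral {a..b} \<gamma> \<ge> 0"
  using integrable_on_Icc_pos pos by (intro integral_nonneg) (auto intro: less_imp_le)

lemma oint_eq_integral_diff:
  assumes "0 < c" "c \<le> 1" "c \<le> s"
  shows "oint 1 s \<gamma> = integral {c..s} \<gamma> - integral {c..1} \<gamma>"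
proof (cases "1 \<le> s")
  case True
  have "integral {c..s} \<gamma> = integral {c..1} \<gamma> + integral {1..s} \<gamma>"
    by (rule Henstock_Kurzweil_Integration.integral_combine[symmetric])
       (use assms True integrable_on_Icc_pos in auto)
  then show ?thesis using True unfolding oint_def by simp
next
  case False
  have "integral {c..1} \<gamma> = integral {c..s} \<gamma> + integral {s..1} \<gamma>"
    by (rule Henstock_Kurzweil_Integration.integral_combine[symmetric])
       (use assms False integrable_on_Icc_pos in auto)
  then show ?thesis using False unfolding oint_def by simp
qed

lemma oint_has_real_derivative:
  assumes s: "s > 0"
  shows "((\<lambda>u. oint 1 u \<gamma>) has_real_derivative \<gamma> s) (at s)"
proof -
  define c where "c = min 1 s / 2"
  have c: "0 < c" "c \<le> 1" "c < s" using s by (auto simp: c_def)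
  have "((\<lambda>u. integral {c..u} \<gamma>) has_real_derivative \<gamma> s) (at s within {c..s+1})"
    by (rule integral_has_real_derivative, rule continuous_on_subset[OF cont]) (use c in auto)
  then have "((\<lambda>u. integral {c..u} \<gamma>) has_real_derivative \<gamma> s) (at s)"
    using c by (simp add: at_within_Icc_at)
  then have "((\<lambda>u. integral {c..u} \<gamma> - integral {c..1} \<gamma>) has_real_derivative \<gamma> s) (at s)"
    using DERIV_diff[OF _ DERIV_const] by fastforce
  then show ?thesis
    by (rule has_field_derivative_transform_within_open[where S = "{c<..}"])
       (use c oint_eq_integral_diff in auto)
qed

lemma oint_scaled_le:
  assumes b0: "0 \<le> b0" "b0 \<le> 1" and s: "0 < s0" "s0 \<le> s"
  shows "(b0 - 1) * oint 1 s \<gamma> \<le> integral {min s0 1..1} \<gamma>"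
proof (cases "1 \<le> s")
  case True
  then have "oint 1 s \<gamma> \<ge> 0"
    unfolding oint_def using integral_Icc_pos_nonneg[of 1 s] by auto
  then show ?thesis
    using b0 integral_Icc_pos_nonneg[of "min s0 1" 1] s
    by (smt (verit) mult_nonpos_nonneg)
next
  case False
  have "0 \<le> integral {s..1} \<gamma>" using integral_Icc_pos_nonneg s by auto
  moreover have "integral {s..1} \<gamma> \<le> integral {min s0 1..1} \<gamma>"
    by (rule integral_subset_le) (use s False integrable_on_Icc_pos pos in \<open>auto intro: less_imp_le\<close>)
  moreover have "oint 1 s \<gamma> = - integral {s..1} \<gamma>" using False unfolding oint_def by auto
  moreover have "(1 - b0) * integral {s..1} \<gamma> \<le> integral {s..1} \<gamma>"
    using b0 calculation(1) by (intro mult_left_le_one_le) auto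
  ultimately show ?thesis by (simp add: algebra_simps)
qed

lemma A3_if_eventually_bounded:
  assumes b0: "0 < b0" "b0 \<le> 1"
    and bound: "\<forall>\<^sub>F s in at_top. s * \<gamma> s + (b0 - 1) * oint 1 s \<gamma> \<le> K"
  shows "A3 \<gamma>"
proof -
  obtain S where S: "\<And>s. s \<ge> S \<Longrightarrow> s * \<gamma> s + (b0 - 1) * oint 1 s \<gamma> \<le> K"
    using bound by (auto simp: eventually_at_top_linorder)
  have "\<exists>K0>0. \<forall>s\<ge>s0. s * \<gamma> s + (b0 - 1) * oint 1 s \<gamma> \<le> K0" if s0: "s0 > 0" for s0
  proof -
    have "continuous_on {s0..max s0 S} (\<lambda>s. s * \<gamma> s)"
      by (intro continuous_intros continuous_on_subset[OF cont]) (use s0 in auto)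
    then obtain M where M: "\<And>s. s \<in> {s0..max s0 S} \<Longrightarrow> s * \<gamma> s \<le> M"
      using continuous_attains_sup[OF compact_Icc, of s0 "max s0 S"] by fastforce
    define C where "C = integral {min s0 1..1} \<gamma>"
    have "s * \<gamma> s + (b0 - 1) * oint 1 s \<gamma> \<le> max 1 (max K (M + C))" if "s \<ge> s0" for s
      using S[of s] M[of s] oint_scaled_le[OF less_imp_le[OF b0(1)] b0(2) s0 that] that
      unfolding C_def by (cases "s \<ge> S") fastforce+
    then show ?thesis by (intro exI[of _ "max 1 (max K (M + C))"]) auto
  qed
  then show ?thesis unfolding A3_def using b0 by blast
qed

lemma A3_if_eventually_mult_bounded:
  assumes "\<forall>\<^sub>F s in at_top. s * \<gamma> s \<le> K"
  shows "A3 \<gamma>"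
  by (rule A3_if_eventually_bounded[of 1 K]) (use assms in simp_all)

lemma A3_if_antimono_doubling_integral_bounded:
  assumes antimono: "\<And>s t. 0 < s \<Longrightarrow> s \<le> t \<Longrightarrow> \<gamma> t \<le> \<gamma> s"
    and A: "\<And>s. s \<ge> 1 \<Longrightarrow> integral {s..2 * s} \<gamma> \<le> A"
  shows "A3 \<gamma>"
proof (rule A3_if_eventually_mult_bounded[of "2 * A"], rule eventually_at_top_linorder[THEN iffD2])
  show "\<exists>N. \<forall>s\<ge>N. s * \<gamma> s \<le> 2 * A"
  proof (intro exI allI impI)
    fix s :: real assume s: "2 \<le> s"
    have "integral {s/2..s} (\<lambda>_. \<gamma> s) \<le> integral {s/2..s} \<gamma>"
      by (rule integral_le) (use s antimono integrable_on_Icc_pos in auto)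
    also have "\<dots> \<le> A" using A[of "s/2"] s by simp
    finally show "s * \<gamma> s \<le> 2 * A" using s by simp
  qed
qed

lemma A3_if_derivative_bound:
  assumes deriv: "\<And>s. s > 0 \<Longrightarrow> (\<gamma> has_real_derivative \<gamma>' s) (at s)"
    and b0: "0 < b0" "b0 \<le> 1" and s1: "s1 > 0"
    and bound: "\<And>s. s \<ge> s1 \<Longrightarrow> s * \<gamma>' s + b0 * \<gamma> s \<le> 0"
  shows "A3 \<gamma>"
proof -
  define g where "g s = s * \<gamma> s + (b0 - 1) * oint 1 s \<gamma>" for s
  have "g s \<le> g s1" if "s \<ge> s1" for s
  proof (rule DERIV_nonpos_imp_nonincreasing[OF that])
    fix x assume x: "s1 \<le> x"
    have "(g has_real_derivative 1 * \<gamma> x + \<gamma>' x * x + (b0 - 1) * \<gamma> x) (at x)"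
      unfolding g_def using x s1
      by (intro DERIV_add DERIV_mult DERIV_ident DERIV_cmult deriv oint_has_real_derivative) auto
    moreover have "1 * \<gamma> x + \<gamma>' x * x + (b0 - 1) * \<gamma> x = x * \<gamma>' x + b0 * \<gamma> x"
      by (simp add: algebra_simps)
    ultimately show "\<exists>y. (g has_real_derivative y) (at x) \<and> y \<le> 0"
      using bound[OF x] by metis
  qed
  then show ?thesis
    by (intro A3_if_eventually_bounded[OF b0, of "g s1"])
       (auto simp: g_def eventually_at_top_linorder)
qed

lemma integral_ge_powr_lower_bound:
  assumes N: "0 < N" "N \<le> s" and l: "l < 1"
    and lower: "\<And>x. x \<in> {N..s} \<Longrightarrow> c * x powr (-l) \<le> \<gamma> x"
  shows "c * (s powr (1 - l) - N powr (1 - l)) / (1 - l) \<le> integral {N..s} \<gamma>"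
proof -
  have "((\<lambda>x. c * x powr (-l)) has_integral
      c * (s powr (1 - l) / (1 - l) - N powr (1 - l) / (1 - l))) {N..s}"
  proof (intro has_integral_mult_right fundamental_theorem_of_calculus[OF N(2)])
    fix x assume "x \<in> {N..s}"
    then have x: "x > 0" using N by auto
    have "((\<lambda>z. z powr (1 - l) / (1 - l)) has_real_derivative
        (1 - l) * x powr (1 - l - 1) / (1 - l)) (at x)"
      by (rule DERIV_cdivide[OF has_real_derivative_powr[OF x]])
    then show "((\<lambda>z. z powr (1 - l) / (1 - l)) has_vector_derivative x powr (-l))
        (at x within {N..s})"
      using l by (simp add: has_real_derivative_iff_has_vector_derivative has_vector_derivative_at_within)
  qed
  then have "c * (s powr (1 - l) / (1 - l) - N powr (1 - l) / (1 - l)) \<le> integral {N..s} \<gamma>"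
    by (rule has_integral_le[OF _ integrable_integral[OF integrable_on_Icc_pos]]) (use N lower in auto)
  then show ?thesis by (simp add: diff_divide_distrib right_diff_distrib)
qed

lemma A3_if_eventually_powr_bounds:
  assumes l: "0 < l" "l < 1" and b0: "0 < b0" "b0 \<le> 1"
    and margin: "(1 - l) * c2 \<le> (1 - b0) * c1"
    and bounds: "\<forall>\<^sub>F s in at_top. c1 \<le> s powr l * \<gamma> s \<and> s powr l * \<gamma> s \<le> c2"
  shows "A3 \<gamma>"
proof -
  obtain N0 where bN0: "\<And>s. s \<ge> N0 \<Longrightarrow> c1 \<le> s powr l * \<gamma> s \<and> s powr l * \<gamma> s \<le> c2"
    using bounds by (auto simp: eventually_at_top_linorder)
  define N where "N = max 1 N0"
  have N: "N \<ge> 1" and bN: "\<And>s. s \<ge> N \<Longrightarrow> c1 \<le> s powr l * \<gamma> s \<and> s powr l * \<gamma> s \<le> c2"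
    using bN0 by (auto simp: N_def)
  define R where "R = (1 - b0) * c1 / (1 - l)"
  define Q where "Q = N powr (1 - l)"
  have R: "c2 \<le> R" using margin l by (simp add: R_def field_simps mult.commute)
  show ?thesis
  proof (rule A3_if_eventually_bounded[OF b0, of "R * Q"],
         unfold eventually_at_top_linorder, intro exI allI impI)
    fix s assume s: "s \<ge> N"
    define P where "P = s powr (1 - l)"
    have "s * \<gamma> s = P * (s powr l * \<gamma> s)"
      using s N by (simp add: P_def powr_add[symmetric])
    also have "\<dots> \<le> P * R" using bN[OF s] R by (intro mult_left_mono) (auto simp: P_def)
    finally have upper: "s * \<gamma> s \<le> R * P" by (simp add: mult.commute)
    have "c1 * x powr (-l) \<le> \<gamma> x" if "x \<in> {N..s}" for x
      using bN[of x] that N by (auto simp: powr_minus_divide field_simps)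
    then have "c1 * (P - Q) / (1 - l) \<le> integral {N..s} \<gamma>"
      unfolding P_def Q_def using s N l by (intro integral_ge_powr_lower_bound) auto
    also have "\<dots> \<le> integral {1..N} \<gamma> + integral {N..s} \<gamma>"
      using integral_Icc_pos_nonneg[of 1 N] by simp
    also have "\<dots> = oint 1 s \<gamma>"
      unfolding oint_def using s N
      by (simp add: Henstock_Kurzweil_Integration.integral_combine integrable_on_Icc_pos)
    finally have "(b0 - 1) * oint 1 s \<gamma> \<le> (b0 - 1) * (c1 * (P - Q) / (1 - l))"
      using b0 by (intro mult_left_mono_neg) auto
    also have "\<dots> = R * Q - R * P"
      by (simp add: R_def diff_divide_distrib algebra_simps)
    finally show "s * \<gamma> s + (b0 - 1) * oint 1 s \<gamma> \<le> R * Q" using upper by linarith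
  qed
qed

lemma A3_if_eventually_powr_upper_bound:
  assumes l: "l \<ge> 1" and bound: "\<forall>\<^sub>F s in at_top. s powr l * \<gamma> s \<le> c"
  shows "A3 \<gamma>"
proof (rule A3_if_eventually_mult_bounded[of c])
  show "\<forall>\<^sub>F s in at_top. s * \<gamma> s \<le> c"
    using bound eventually_ge_at_top[of 1]
  proof eventually_elim
    case (elim s)
    have "s powr (1 - l) \<le> s powr 0" using elim l by (intro powr_mono) auto
    then have "s powr (1 - l) \<le> 1" using elim by simp
    then have "s powr (1 - l) * (s powr l * \<gamma> s) \<le> s powr l * \<gamma> s"
      using pos[of s] elim by (intro mult_left_le_one_le) auto
    moreover have "s * \<gamma> s = s powr (1 - l) * (s powr l * \<gamma> s)"
      using elim by (simp add: powr_add[symmetric])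
    ultimately show ?case using elim by linarith
  qed
qed

lemma A3_if_powr_Liminf_Limsup:
  assumes l: "l > 0" "0 < Bl" "Bl \<le> Al" "(1 - l) * Al < Bl"
    and lim: "Liminf at_top (\<lambda>s. ereal (s powr l * \<gamma> s)) = ereal Bl"
      "Limsup at_top (\<lambda>s. ereal (s powr l * \<gamma> s)) = ereal Al"
  shows "A3 \<gamma>"
proof -
  have bounds: "\<forall>\<^sub>F s in at_top. Bl - e \<le> s powr l * \<gamma> s \<and> s powr l * \<gamma> s \<le> Al + e"
    if "e > 0" for e
    using eventually_between_Liminf_Limsup[OF lim that] by (auto elim: eventually_mono)
  show ?thesis
  proof (cases "l < 1")
    case True
    then obtain b0 e where "0 < b0" "b0 \<le> 1" "e > 0" "(1 - l) * (Al + e) \<le> (1 - b0) * (Bl - e)"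
      using exists_exponent_and_margin[of l Al Bl] l by auto
    then show ?thesis using A3_if_eventually_powr_bounds bounds l True by blast
  next
    case False
    have "\<forall>\<^sub>F s in at_top. s powr l * \<gamma> s \<le> Al + 1"
      using bounds[of 1] by (auto elim: eventually_mono)
    then show ?thesis using False by (intro A3_if_eventually_powr_upper_bound[of l "Al + 1"]) auto
  qed
qed

end

theorem lemma2p6:
  fixes \<gamma> \<gamma>' :: "real \<Rightarrow> real"
  assumes deriv: "\<And>s. s > 0 \<Longrightarrow> (\<gamma> has_real_derivative \<gamma>' s) (at s)"
    and cont: "continuous_on {0<..} \<gamma>'"
    and pos: "\<And>s. s > 0 \<Longrightarrow> \<gamma> s > 0"
    and cases:
      "(\<forall>s t. 0 < s \<and> s \<le> t \<longrightarrow> \<gamma> t \<le> \<gamma> s) \<and>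
          (\<exists>A>0. \<forall>s\<ge>1. integral {s .. 2 * s} \<gamma> \<le> A)
       \<or> (\<exists>b0 s1. 0 < b0 \<and> b0 \<le> 1 \<and> s1 > 0 \<and>
          (\<forall>s\<ge>s1. s * \<gamma>' s + b0 * \<gamma> s \<le> 0))
       \<or> (\<exists>l Bl Al. l > 0 \<and> 0 < Bl \<and> Bl \<le> Al \<and> (1 - l) * Al < Bl \<and>
          Liminf at_top (\<lambda>s. ereal (s powr l * \<gamma> s)) = ereal Bl \<and>
          Limsup at_top (\<lambda>s. ereal (s powr l * \<gamma> s)) = ereal Al)"
  shows "A3 \<gamma>"
proof -
  have cont_\<gamma>: "continuous_on {0<..} \<gamma>"
    by (rule continuous_at_imp_continuous_on) (use deriv DERIV_isCont in auto)
  from cases show ?thesis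
  proof (elim disjE conjE exE)
    fix A assume "\<forall>s t. 0 < s \<and> s \<le> t \<longrightarrow> \<gamma> t \<le> \<gamma> s" "\<forall>s\<ge>1. integral {s..2 * s} \<gamma> \<le> A"
    then show ?thesis by (intro A3_if_antimono_doubling_integral_bounded[OF cont_\<gamma> pos]) auto
  next
    fix b0 s1 assume b0: "0 < b0" "b0 \<le> 1" and s1: "s1 > 0"
      and "\<forall>s\<ge>s1. s * \<gamma>' s + b0 * \<gamma> s \<le> 0"
    then show ?thesis by (intro A3_if_derivative_bound[OF cont_\<gamma> pos deriv b0 s1]) auto
  next
    fix l Bl Al assume "l > 0" "0 < Bl" "Bl \<le> Al" "(1 - l) * Al < Bl"
      "Liminf at_top (\<lambda>s. ereal (s powr l * \<gamma> s)) = ereal Bl"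
      "Limsup at_top (\<lambda>s. ereal (s powr l * \<gamma> s)) = ereal Al"
    then show ?thesis using A3_if_powr_Liminf_Limsup[OF cont_\<gamma> pos] by blast
  qed
qed

end
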